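(* Let $d\ge1$. Let $G$ be a $3$-connected ordered graph on $n$ vertices with $m$ edges, and let $H$ be an ordered graph with no isolated vertices and with $m$ edges. Suppose $M^{\mathbb E}_{d,G}=M^{\mathbb E}_{d,H}$. Then there is a bijection $\sigma$ from the vertex set of $G$ to the vertex set of $H$ such that for every $k$, if the $k$-th edge of $G$ is $\{i,j\}$ then the $k$-th edge of $H$ is $\{\sigma(i),\sigma(j)\}$.
   Context: An ordered graph is a finite vertex set together with an ordered sequence $(E_1,\dots,E_m)$ of distinct unordered pairs of distinct vertices. For a real configuration $\mathbf p$ (one point $\mathbf p_i\in\mathbb R^d$ per vertex), $m^{\mathbb E}_G(\mathbf p)\in\mathbb R^m$ has $k$-th coordinate $\|\mathbf p_i-\mathbf p_j\|^2$ where $E_k=\{i,j\}$. The Euclidean measurement set $M^{\mathbb E}_{d,G}\subseteq\mathbb R^m$ is the image of $m^{\mathbb E}_G$ over all real configurations in $\mathbb R^d$. *)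

theory Defs
  imports "HOL-Analysis.Analysis"
begin

text \<open>Each edge is stored
  as a pair (i,j) of distinct vertices representing the unordered pair {i,j};
  the unordered pairs are pairwise distinct.\<close>
definition ordered_graph :: "'a set \<Rightarrow> ('a \<times> 'a) list \<Rightarrow> bool" where
  "ordered_graph V E \<longleftrightarrow> finite V \<and>
     (\<forall>(i,j)\<in>set E. i \<in> V \<and> j \<in> V \<and> i \<noteq> j) \<and>
     distinct (map (\<lambda>(i,j). {i,j}) E)"

definition edge_set :: "('a \<times> 'a) list \<Rightarrow> 'a set list" where
  "edge_set E = map (\<lambda>(i,j). {i,j}) E"

definition adj_on :: "'a set \<Rightarrow> ('a \<times> 'a) list \<Rightarrow> ('a \<times> 'a) set" where
  "adj_on W E = {(u,v). u \<in> W \<and> v \<in> W \<and> ((u,v) \<in> set E \<or> (v,u) \<in> set E)}"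

definition connected_on :: "'a set \<Rightarrow> ('a \<times> 'a) list \<Rightarrow> bool" where
  "connected_on W E \<longleftrightarrow> (\<forall>u\<in>W. \<forall>v\<in>W. (u,v) \<in> (adj_on W E)\<^sup>*)"

definition k_connected :: "nat \<Rightarrow> 'a set \<Rightarrow> ('a \<times> 'a) list \<Rightarrow> bool" where
  "k_connected k V E \<longleftrightarrow> card V > k \<and>
     (\<forall>X. X \<subseteq> V \<and> card X < k \<longrightarrow> connected_on (V - X) E)"

definition no_isolated_vertices :: "'a set \<Rightarrow> ('a \<times> 'a) list \<Rightarrow> bool" where
  "no_isolated_vertices V E \<longleftrightarrow> (\<forall>v\<in>V. \<exists>(i,j)\<in>set E. v = i \<or> v = j)"

text \<open>Euclidean measurement map and measurement set, configurations in real^'d.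
  Vectors in R^m are represented as lists of length m.\<close>
definition meas_E :: "('a \<times> 'a) list \<Rightarrow> ('a \<Rightarrow> real^'d) \<Rightarrow> real list" where
  "meas_E E p = map (\<lambda>(i,j). (norm (p i - p j))\<^sup>2) E"

definition meas_set_E :: "'d::finite itself \<Rightarrow> ('a \<times> 'a) list \<Rightarrow> real list set" where
  "meas_set_E _ E = {meas_E E (p :: 'a \<Rightarrow> real^'d) | p. True}"

end

theory Submission
  imports Defs
begin

text \<open>
  An edge k lies in the closure of an edge set X in the cycle matroid (its endpoints are joined
  by edges of X) iff every configuration giving length zero to all edges of X gives length zero
  to k. This depends only on the measurement set, so G and H have the same cycle matroid.
  Matroidally, the vertex stars of a 3-connected graph are exactly its non-separating
  cocircuits (Tutte), while in any loopless graph every non-separating cocircuit is a vertex star.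
  Sending each vertex of G to the vertex of H with the same star gives the bijection.
\<close>

definition edge_rel :: "('v \<times> 'v) list \<Rightarrow> nat set \<Rightarrow> ('v \<times> 'v) set" where
  "edge_rel E X = {(u, w). \<exists>j\<in>X. j < length E \<and> (E!j = (u, w) \<or> E!j = (w, u))}"

definition spans :: "('v \<times> 'v) list \<Rightarrow> nat set \<Rightarrow> nat \<Rightarrow> bool" where
  "spans E X k \<longleftrightarrow> k < length E \<and> (fst (E!k), snd (E!k)) \<in> (edge_rel E X)\<^sup>*"

definition star :: "('v \<times> 'v) list \<Rightarrow> 'v \<Rightarrow> nat set" where
  "star E v = {j. j < length E \<and> v \<in> edge_set E ! j}"

text \<open>The closure-theoretic form of "A is a separator of the matroid restricted to U".\<close>

definition separator :: "(nat set \<Rightarrow> nat \<Rightarrow> bool) \<Rightarrow> nat set \<Rightarrow> nat set \<Rightarrow> bool" where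
  "separator cl U A \<longleftrightarrow> (\<forall>X\<subseteq>U. \<forall>j\<in>A. cl X j \<longrightarrow> cl (X \<inter> A) j)"

text \<open>The complement of T is a hyperplane (the two middle clauses) without proper separator.\<close>

definition nonseparating_cocircuit :: "(nat set \<Rightarrow> nat \<Rightarrow> bool) \<Rightarrow> nat \<Rightarrow> nat set \<Rightarrow> bool" where
  "nonseparating_cocircuit cl m T \<longleftrightarrow> T \<noteq> {} \<and> T \<subseteq> {..<m} \<and>
     (\<forall>k\<in>T. \<not> cl ({..<m} - T) k) \<and>
     (\<forall>k\<in>T. \<forall>l\<in>T. cl (insert k ({..<m} - T)) l) \<and>
     (\<forall>A\<subseteq>{..<m} - T. separator cl ({..<m} - T) A \<longrightarrow> A = {} \<or> A = {..<m} - T)"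

lemma edge_rel_iff:
  "(u, w) \<in> edge_rel E X \<longleftrightarrow> (\<exists>j\<in>X. j < length E \<and> (E!j = (u, w) \<or> E!j = (w, u)))"
  unfolding edge_rel_def by simp

lemma sym_edge_rel: "sym (edge_rel E X)"
  by (rule symI) (auto simp: edge_rel_iff)

lemma edge_rel_rtrancl_sym: "(u, w) \<in> (edge_rel E X)\<^sup>* \<Longrightarrow> (w, u) \<in> (edge_rel E X)\<^sup>*"
  by (meson sym_edge_rel sym_rtrancl symD)

lemma nth_edge_set: "j < length E \<Longrightarrow> edge_set E ! j = {fst (E!j), snd (E!j)}"
  by (simp add: edge_set_def split_beta)

lemma edge_rel_if_edge_set:
  assumes "j \<in> X" "j < length E" "edge_set E ! j = {u, w}"
  shows "(u, w) \<in> edge_rel E X"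
  using assms by (cases "E!j") (auto simp: edge_rel_iff nth_edge_set doubleton_eq_iff)

lemma spans_iff_endpoints:
  assumes "k < length E" "edge_set E ! k = {a, b}"
  shows "spans E X k \<longleftrightarrow> (a, b) \<in> (edge_rel E X)\<^sup>*"
  using assms edge_rel_rtrancl_sym[of a b E X] edge_rel_rtrancl_sym[of b a E X]
  by (auto simp: spans_def nth_edge_set doubleton_eq_iff)

lemma edge_rel_rtrancl_const:
  assumes "(u, w) \<in> (edge_rel E X)\<^sup>*"
    and "\<forall>j\<in>X. j < length E \<longrightarrow> p (fst (E!j)) = p (snd (E!j))"
  shows "p u = p w"
  using assms(1)
proof induction
  case (step y z)
  then obtain j where "j \<in> X" "j < length E" "E!j = (y, z) \<or> E!j = (z, y)"
    by (auto simp: edge_rel_iff)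
  with assms(2) step.IH show ?case by (metis fst_conv snd_conv)
qed simp

lemma spans_iff_collapsing_configurations:
  "spans E X k \<longleftrightarrow> k < length E \<and> (\<forall>p :: 'v \<Rightarrow> real^'d.
      (\<forall>j\<in>X. j < length E \<longrightarrow> p (fst (E!j)) = p (snd (E!j))) \<longrightarrow> p (fst (E!k)) = p (snd (E!k)))"
  (is "_ \<longleftrightarrow> _ \<and> ?collapse")
proof (cases "k < length E")
  case True
  let ?r = "(edge_rel E X)\<^sup>*"
  have "spans E X k" if ?collapse
  proof -
    define one :: "real^'d" where "one = (\<chi> i. 1)"
    have "one \<noteq> 0" unfolding one_def by (simp add: vec_eq_iff)
    define p :: "'v \<Rightarrow> real^'d" where "p u = (if (fst (E!k), u) \<in> ?r then 0 else one)" for u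
    have "p (fst (E!j)) = p (snd (E!j))" if "j \<in> X" "j < length E" for j
    proof -
      have "(fst (E!j), snd (E!j)) \<in> edge_rel E X" "(snd (E!j), fst (E!j)) \<in> edge_rel E X"
        by (metis edge_rel_if_edge_set insert_commute nth_edge_set that)+
      then show ?thesis unfolding p_def by (meson rtrancl.rtrancl_into_rtrancl)
    qed
    with \<open>?collapse\<close> have "p (fst (E!k)) = p (snd (E!k))" by blast
    with \<open>one \<noteq> 0\<close> True show ?thesis by (auto simp: p_def spans_def split: if_splits)
  qed
  with True show ?thesis
    by (auto simp: spans_def intro: edge_rel_rtrancl_const)
qed (simp add: spans_def)

lemma spans_iff_meas_set:
  fixes E :: "('v \<times> 'v) list"
  shows "spans E X k \<longleftrightarrow> k < length E \<and>
     (\<forall>x\<in>meas_set_E TYPE('d::finite) E. (\<forall>j\<in>X. j < length E \<longrightarrow> x!j = 0) \<longrightarrow> x!k = 0)"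
proof -
  have zero: "meas_E E p ! j = 0 \<longleftrightarrow> p (fst (E!j)) = p (snd (E!j))" if "j < length E"
    for j and p :: "'v \<Rightarrow> real^'d"
    using that by (simp add: meas_E_def split_beta)
  have ball: "(\<forall>x\<in>meas_set_E TYPE('d) E. Q x) \<longleftrightarrow> (\<forall>p :: 'v \<Rightarrow> real^'d. Q (meas_E E p))" for Q
    unfolding meas_set_E_def by blast
  show ?thesis
    unfolding spans_iff_collapsing_configurations[where 'd='d] ball by (auto simp: zero)
qed

lemma spans_eq_if_meas_set_eq:
  assumes "meas_set_E TYPE('d::finite) E1 = meas_set_E TYPE('d) E2" "length E1 = length E2"
  shows "spans E1 = spans E2"
  using assms by (intro ext) (simp add: spans_iff_meas_set[where 'd='d])

lemma ordered_graph_edgeE: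
  assumes "ordered_graph V E" "j < length E"
  obtains a b where "E!j = (a, b)" "edge_set E ! j = {a, b}" "a \<in> V" "b \<in> V" "a \<noteq> b"
proof -
  have "E!j \<in> set E" using assms(2) by simp
  with assms show thesis
    using that by (cases "E!j") (auto simp: ordered_graph_def nth_edge_set)
qed

lemma ordered_graph_nth_edge_set_inj:
  assumes "ordered_graph V E" "j < length E" "l < length E" "edge_set E ! j = edge_set E ! l"
  shows "j = l"
  using assms nth_eq_iff_index_eq unfolding ordered_graph_def edge_set_def by fastforce

lemma star_edgeE:
  assumes "ordered_graph V E" "k \<in> star E v"
  obtains u where "k < length E" "edge_set E ! k = {v, u}" "u \<in> V" "u \<noteq> v"
proof -
  have k: "k < length E" "v \<in> edge_set E ! k" using assms(2) by (auto simp: star_def)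
  obtain a b where ab: "edge_set E ! k = {a, b}" "a \<in> V" "b \<in> V" "a \<noteq> b"
    using ordered_graph_edgeE[OF assms(1) k(1)] by metis
  then have "\<exists>u. edge_set E ! k = {v, u} \<and> u \<in> V \<and> u \<noteq> v"
    using k(2) by (metis insert_commute insert_iff singletonD)
  with k(1) that show thesis by blast
qed

lemma star_complement:
  assumes "ordered_graph V E"
  shows "{..<length E} - star E v = {j. j < length E \<and> edge_set E ! j \<subseteq> V - {v}}"
proof -
  have "v \<notin> edge_set E ! j \<longleftrightarrow> edge_set E ! j \<subseteq> V - {v}" if j: "j < length E" for j
  proof -
    obtain a b where "edge_set E ! j = {a, b}" "a \<in> V" "b \<in> V"
      using ordered_graph_edgeE[OF assms j] by metis
    then show ?thesis by auto
  qed
  then show ?thesis by (auto simp: star_def)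
qed

lemma k_connected_mono: "k_connected k V E \<Longrightarrow> j \<le> k \<Longrightarrow> k_connected j V E"
  unfolding k_connected_def by auto

lemma k_connected_connected_on:
  "k_connected k V E \<Longrightarrow> X \<subseteq> V \<Longrightarrow> card X < k \<Longrightarrow> connected_on (V - X) E"
  unfolding k_connected_def by blast

lemma adj_on_edgeE:
  assumes "(u, w) \<in> adj_on W E"
  obtains j where "j < length E" "edge_set E ! j = {u, w}" "u \<in> W" "w \<in> W"
proof -
  from assms have "u \<in> W" "w \<in> W" "\<exists>j<length E. E!j = (u, w) \<or> E!j = (w, u)"
    by (auto simp: adj_on_def in_set_conv_nth)
  then obtain j where "j < length E" "edge_set E ! j = {u, w}"
    by (auto simp: nth_edge_set insert_commute)
  with \<open>u \<in> W\<close> \<open>w \<in> W\<close> that show thesis by blast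
qed

lemma adj_on_rtrancl_edge_rel:
  assumes "(u, w) \<in> (adj_on W E)\<^sup>*"
    and "\<And>j. j < length E \<Longrightarrow> edge_set E ! j \<subseteq> W \<Longrightarrow> j \<in> X"
  shows "(u, w) \<in> (edge_rel E X)\<^sup>*"
  using assms(1)
proof induction
  case (step y z)
  from step.hyps(2) obtain j where "j < length E" "edge_set E ! j = {y, z}" "y \<in> W" "z \<in> W"
    by (rule adj_on_edgeE)
  with assms(2) have "(y, z) \<in> edge_rel E X" by (intro edge_rel_if_edge_set) auto
  with step.IH show ?case by (rule rtrancl_into_rtrancl)
qed simp

lemma edge_rel_rtrancl_isolated:
  assumes "(z, y) \<in> (edge_rel E X)\<^sup>*"
    and "\<And>j. j \<in> X \<Longrightarrow> j < length E \<Longrightarrow> z \<notin> edge_set E ! j"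
  shows "y = z"
  using assms(1)
proof (cases rule: converse_rtranclE)
  case (step c)
  then obtain j where "j \<in> X" "j < length E" "E!j = (z, c) \<or> E!j = (c, z)"
    by (auto simp: edge_rel_iff)
  with assms(2) show ?thesis by (force simp: nth_edge_set)
qed simp


lemma star_diff:
  assumes og: "ordered_graph V E" and kc: "k_connected 2 V E"
    and v: "v \<in> V" "v' \<in> V" "v \<noteq> v'"
  obtains j where "j \<in> star E v" "j \<notin> star E v'"
proof -
  have "card V > 2" using kc by (simp add: k_connected_def)
  moreover have "card {v, v'} \<le> 2" by (simp add: card_insert_if)
  ultimately have "\<not> V \<subseteq> {v, v'}" using card_mono[of "{v, v'}" V] by fastforce
  then obtain u where u: "u \<in> V" "u \<noteq> v" "u \<noteq> v'" by blast
  have "connected_on (V - {v'}) E" using k_connected_connected_on[OF kc] v(2) by simp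
  with u v have "(v, u) \<in> (adj_on (V - {v'}) E)\<^sup>*" by (auto simp: connected_on_def)
  with u(2) obtain y where "(v, y) \<in> adj_on (V - {v'}) E"
    by (auto elim: converse_rtranclE)
  then obtain j where "j < length E" "edge_set E ! j = {v, y}" "y \<in> V - {v'}"
    by (rule adj_on_edgeE)
  with v(3) show thesis by (intro that[of j]) (auto simp: star_def)
qed

lemma star_not_spanned_by_complement:
  assumes "ordered_graph V E" "k \<in> star E v"
  shows "\<not> spans E ({..<length E} - star E v) k"
proof
  obtain u where k: "k < length E" "edge_set E ! k = {v, u}" "u \<noteq> v"
    using star_edgeE[OF assms] by metis
  assume "spans E ({..<length E} - star E v) k"
  then have "(v, u) \<in> (edge_rel E ({..<length E} - star E v))\<^sup>*"
    using spans_iff_endpoints[OF k(1,2)] by simp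
  then have "u = v" by (rule edge_rel_rtrancl_isolated) (auto simp: star_def)
  with k(3) show False by simp
qed

lemma star_spanned_by_complement_and_edge:
  assumes og: "ordered_graph V E" and conn: "connected_on (V - {v}) E"
    and "k \<in> star E v" "l \<in> star E v"
  shows "spans E (insert k ({..<length E} - star E v)) l"
proof -
  let ?X = "insert k ({..<length E} - star E v)"
  obtain u where k: "k < length E" "edge_set E ! k = {v, u}" "u \<in> V" "u \<noteq> v"
    using star_edgeE[OF og assms(3)] by metis
  obtain w where l: "l < length E" "edge_set E ! l = {v, w}" "w \<in> V" "w \<noteq> v"
    using star_edgeE[OF og assms(4)] by metis
  have "(u, w) \<in> (adj_on (V - {v}) E)\<^sup>*" using conn k l by (auto simp: connected_on_def)
  then have "(u, w) \<in> (edge_rel E ?X)\<^sup>*"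
    by (rule adj_on_rtrancl_edge_rel) (auto simp: star_complement[OF og])
  moreover have "(v, u) \<in> edge_rel E ?X" using k by (intro edge_rel_if_edge_set) auto
  ultimately have "(v, w) \<in> (edge_rel E ?X)\<^sup>*" by (rule converse_rtrancl_into_rtrancl[rotated])
  then show ?thesis using spans_iff_endpoints[OF l(1,2)] by simp
qed


lemma connected_edges_share_vertex:
  assumes conn: "connected_on W E"
    and A: "A \<subseteq> {j. j < length E \<and> edge_set E ! j \<subseteq> W}" "k0 \<in> A"
    and l0: "l0 < length E" "edge_set E ! l0 \<subseteq> W" "l0 \<notin> A"
  shows "\<exists>x k l. k \<in> A \<and> l < length E \<and> edge_set E ! l \<subseteq> W \<and> l \<notin> A \<and>
           x \<in> edge_set E ! k \<and> x \<in> edge_set E ! l"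
proof (rule ccontr)
  assume no_shared: "\<not> ?thesis"
  define confined where
    "confined u \<longleftrightarrow> (\<forall>j<length E. edge_set E ! j \<subseteq> W \<longrightarrow> u \<in> edge_set E ! j \<longrightarrow> j \<in> A)" for u
  have confined: "confined u" if "u \<in> edge_set E ! k" "k \<in> A" for u k
    using no_shared that by (auto simp: confined_def)
  have k0: "k0 < length E" "edge_set E ! k0 \<subseteq> W" using A by auto
  let ?s = "fst (E!k0)" and ?t = "fst (E!l0)"
  have "?s \<in> W" "?t \<in> W" using k0 l0 by (auto simp: nth_edge_set)
  then have "(?s, ?t) \<in> (adj_on W E)\<^sup>*" using conn by (simp add: connected_on_def)
  then have "confined ?t"
  proof induction
    case base show ?case by (rule confined[OF _ A(2)]) (simp add: nth_edge_set k0(1))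
  next
    case (step y z)
    from step.hyps(2) obtain j where "j < length E" "edge_set E ! j = {y, z}" "y \<in> W" "z \<in> W"
      by (rule adj_on_edgeE)
    with step.IH have "j \<in> A" by (auto simp: confined_def)
    with \<open>edge_set E ! j = {y, z}\<close> show ?case by (intro confined) auto
  qed
  with l0 show False by (auto simp: confined_def nth_edge_set)
qed

lemma star_complement_no_separator:
  assumes og: "ordered_graph V E" and kc: "k_connected 3 V E" and v: "v \<in> V"
    and A: "A \<subseteq> {..<length E} - star E v"
    and sep: "separator (spans E) ({..<length E} - star E v) A"
  shows "A = {} \<or> A = {..<length E} - star E v"
proof (rule ccontr)
  let ?U = "{..<length E} - star E v"
  have U: "?U = {j. j < length E \<and> edge_set E ! j \<subseteq> V - {v}}" by (rule star_complement[OF og])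
  assume "\<not> (A = {} \<or> A = ?U)"
  then obtain k0 l0 where "k0 \<in> A" "l0 \<in> ?U" "l0 \<notin> A" using A by blast
  moreover have "connected_on (V - {v}) E" using k_connected_connected_on[OF kc] v by simp
  ultimately obtain x k l where kl: "k \<in> A" "l \<in> ?U" "l \<notin> A" "x \<in> edge_set E ! k" "x \<in> edge_set E ! l"
    using connected_edges_share_vertex[of "V - {v}" E A k0 l0] A unfolding U by blast
  have "k \<in> ?U" using kl(1) A by blast
  obtain y where k: "k < length E" "edge_set E ! k = {x, y}" "y \<noteq> x"
    using star_edgeE[OF og, of k x] kl(4) \<open>k \<in> ?U\<close> by (auto simp: star_def)
  obtain z where l: "l < length E" "edge_set E ! l = {x, z}" "z \<noteq> x"
    using star_edgeE[OF og, of l x] kl(5) \<open>l \<in> ?U\<close> by (auto simp: star_def)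
  have "k \<noteq> l" using kl by auto
  then have "y \<noteq> z" using ordered_graph_nth_edge_set_inj[OF og k(1) l(1)] k l by auto
  have in_W: "x \<in> V - {v}" "y \<in> V - {v}" "z \<in> V - {v}"
    using k l \<open>k \<in> ?U\<close> \<open>l \<in> ?U\<close> unfolding U by auto
  \<comment> \<open>a path from y to z avoiding v and x, closed up by l, makes X span k\<close>
  let ?X = "insert l {j. j < length E \<and> edge_set E ! j \<subseteq> V - {v, x}}"
  have "card {v, x} < 3" by (simp add: card_insert_if)
  then have "connected_on (V - {v, x}) E" using k_connected_connected_on[OF kc] v in_W by auto
  then have "(y, z) \<in> (adj_on (V - {v, x}) E)\<^sup>*"
    using in_W k(3) l(3) by (auto simp: connected_on_def)
  then have "(y, z) \<in> (edge_rel E ?X)\<^sup>*" by (rule adj_on_rtrancl_edge_rel) auto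
  moreover have "(z, x) \<in> edge_rel E ?X" using l by (intro edge_rel_if_edge_set) auto
  ultimately have "(y, x) \<in> (edge_rel E ?X)\<^sup>*" by (rule rtrancl_into_rtrancl)
  then have "spans E ?X k" using spans_iff_endpoints[OF k(1), of y x] k(2) by (simp add: insert_commute)
  moreover have "?X \<subseteq> ?U" using kl(2) unfolding U by auto
  ultimately have "spans E (?X \<inter> A) k" using sep kl(1) by (auto simp: separator_def)
  then have "(x, y) \<in> (edge_rel E (?X \<inter> A))\<^sup>*" using spans_iff_endpoints[OF k(1,2)] by simp
  then have "y = x" by (rule edge_rel_rtrancl_isolated) (use kl(3) in auto)
  with k(3) show False by simp
qed

lemma star_nonseparating_cocircuit:
  assumes og: "ordered_graph V E" and kc: "k_connected 3 V E" and v: "v \<in> V"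
  shows "nonseparating_cocircuit (spans E) (length E) (star E v)"
proof -
  have kc2: "k_connected 2 V E" using kc by (rule k_connected_mono) simp
  have "card V > 3" using kc by (simp add: k_connected_def)
  then have "\<not> V \<subseteq> {v}" using card_mono[of "{v}" V] by fastforce
  then obtain v' where "v' \<in> V" "v \<noteq> v'" by blast
  then have "star E v \<noteq> {}" using star_diff[OF og kc2 v] by blast
  moreover have "connected_on (V - {v}) E" using k_connected_connected_on[OF kc] v by simp
  ultimately show ?thesis
    unfolding nonseparating_cocircuit_def
    using star_not_spanned_by_complement[OF og] star_spanned_by_complement_and_edge[OF og]
      star_complement_no_separator[OF og kc v]
    by (auto simp: star_def)
qed


lemma edge_rel_insert_rtrancl:
  assumes k: "k < length E" "E!k = (a, b)"
    and "(x, y) \<in> (edge_rel E (insert k X))\<^sup>*"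
  shows "(x, y) \<in> (edge_rel E X)\<^sup>* \<or>
         (x, a) \<in> (edge_rel E X)\<^sup>* \<and> (b, y) \<in> (edge_rel E X)\<^sup>* \<or>
         (x, b) \<in> (edge_rel E X)\<^sup>* \<and> (a, y) \<in> (edge_rel E X)\<^sup>*"
  using assms(3)
proof induction
  case (step y z)
  have "(y, z) \<in> edge_rel E X \<or> (y, z) = (a, b) \<or> (y, z) = (b, a)"
    using step.hyps(2) k by (auto simp: edge_rel_iff)
  then show ?case
  proof (elim disjE)
    assume "(y, z) \<in> edge_rel E X"
    with step.IH show ?case by (meson rtrancl.rtrancl_into_rtrancl)
  next
    assume "(y, z) = (a, b)"
    with step.IH show ?case by auto
  next
    assume "(y, z) = (b, a)"
    with step.IH show ?case by auto
  qed
qed simp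

lemma edge_crosses_cocircuit_edge:
  assumes k: "k < length E" "E!k = (a, b)"
    and l: "spans E (insert k U) l" "\<not> spans E U l"
  shows "\<exists>c d. edge_set E ! l = {c, d} \<and>
           (a, c) \<in> (edge_rel E U)\<^sup>* \<and> (b, d) \<in> (edge_rel E U)\<^sup>*"
proof -
  let ?c = "fst (E!l)" and ?d = "snd (E!l)"
  have "l < length E" using l(1) by (simp add: spans_def)
  have "(?c, ?d) \<in> (edge_rel E (insert k U))\<^sup>*" "(?c, ?d) \<notin> (edge_rel E U)\<^sup>*"
    using l by (simp_all add: spans_def)
  then have "(?c, a) \<in> (edge_rel E U)\<^sup>* \<and> (b, ?d) \<in> (edge_rel E U)\<^sup>* \<or>
             (?c, b) \<in> (edge_rel E U)\<^sup>* \<and> (a, ?d) \<in> (edge_rel E U)\<^sup>*"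
    using edge_rel_insert_rtrancl[OF k] by blast
  then show ?thesis
  proof
    assume "(?c, a) \<in> (edge_rel E U)\<^sup>* \<and> (b, ?d) \<in> (edge_rel E U)\<^sup>*"
    then show ?thesis
      by (intro exI[of _ ?c] exI[of _ ?d]) (auto simp: nth_edge_set[OF \<open>l < length E\<close>] intro: edge_rel_rtrancl_sym)
  next
    assume "(?c, b) \<in> (edge_rel E U)\<^sup>* \<and> (a, ?d) \<in> (edge_rel E U)\<^sup>*"
    then show ?thesis
      by (intro exI[of _ ?d] exI[of _ ?c])
        (auto simp: nth_edge_set[OF \<open>l < length E\<close>] insert_commute intro: edge_rel_rtrancl_sym)
  qed
qed

lemma edge_rel_rtrancl_edge_at:
  assumes "(c, u) \<in> (edge_rel E X)\<^sup>*" "u \<noteq> c"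
  obtains j where "j \<in> X" "j < length E" "(c, fst (E!j)) \<in> (edge_rel E X)\<^sup>*"
proof -
  obtain j where j: "j \<in> X" "j < length E" "c \<in> edge_set E ! j"
    using edge_rel_rtrancl_isolated[OF assms(1)] assms(2) by blast
  then have "c = fst (E!j) \<or> edge_set E ! j = {c, fst (E!j)}" by (auto simp: nth_edge_set)
  then have "(c, fst (E!j)) \<in> (edge_rel E X)\<^sup>*" using j(1,2) by (auto intro: edge_rel_if_edge_set)
  with j(1,2) that show thesis by blast
qed

lemma component_separator:
  "separator (spans E) U {j \<in> U. (a, fst (E!j)) \<in> (edge_rel E U)\<^sup>*}"
  (is "separator _ _ ?A")
proof -
  let ?r = "(edge_rel E U)\<^sup>*"
  have stay: "(x, y) \<in> (edge_rel E (X \<inter> ?A))\<^sup>*"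
    if X: "X \<subseteq> U" and xy: "(x, y) \<in> (edge_rel E X)\<^sup>*" and ax: "(a, x) \<in> ?r" for X x y
    using xy
  proof induction
    case (step y z)
    obtain j where j: "j \<in> X" "j < length E" "E!j = (y, z) \<or> E!j = (z, y)"
      using step.hyps(2) by (auto simp: edge_rel_iff)
    have "edge_rel E X \<subseteq> edge_rel E U" using X unfolding edge_rel_def by blast
    then have "(a, y) \<in> ?r" using ax step.hyps(1) by (meson rtrancl_mono rtrancl_trans subsetD)
    moreover have "(y, z) \<in> edge_rel E U" using j X by (auto simp: edge_rel_iff)
    ultimately have "(a, z) \<in> ?r" by (rule rtrancl_into_rtrancl)
    with \<open>(a, y) \<in> ?r\<close> j X have "j \<in> ?A" by auto
    with j have "(y, z) \<in> edge_rel E (X \<inter> ?A)" by (auto simp: edge_rel_iff)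
    with step.IH show ?case by (rule rtrancl_into_rtrancl)
  qed simp
  show ?thesis unfolding separator_def spans_def using stay by blast
qed

lemma star_if_isolated_in_complement:
  assumes og: "ordered_graph V E" and T: "T \<subseteq> {..<length E}"
    and c: "\<And>l. l \<in> T \<Longrightarrow> c \<in> edge_set E ! l"
    and iso: "\<And>u. (c, u) \<in> (edge_rel E ({..<length E} - T))\<^sup>* \<Longrightarrow> u = c"
  shows "T = star E c"
proof
  show "T \<subseteq> star E c" using T c by (auto simp: star_def)
  show "star E c \<subseteq> T"
  proof
    fix j assume "j \<in> star E c"
    then obtain u where j: "j < length E" "edge_set E ! j = {c, u}" "u \<noteq> c"
      using star_edgeE[OF og] by metis
    show "j \<in> T"
    proof (rule ccontr)
      assume "j \<notin> T"
      with j have "(c, u) \<in> edge_rel E ({..<length E} - T)" by (intro edge_rel_if_edge_set) auto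
      then have "u = c" by (intro iso) auto
      with j(3) show False ..
    qed
  qed
qed


lemma proper_separator_if_two_components:
  assumes "(a, b) \<notin> (edge_rel E U)\<^sup>*"
    and "(a, a') \<in> (edge_rel E U)\<^sup>*" "a' \<noteq> a" and "(b, b') \<in> (edge_rel E U)\<^sup>*" "b' \<noteq> b"
  shows "\<exists>A\<subseteq>U. separator (spans E) U A \<and> A \<noteq> {} \<and> A \<noteq> U"
proof -
  let ?r = "(edge_rel E U)\<^sup>*"
  define A where "A = {j \<in> U. (a, fst (E!j)) \<in> ?r}"
  obtain ja where "ja \<in> U" "(a, fst (E!ja)) \<in> ?r"
    using assms(2,3) by (rule edge_rel_rtrancl_edge_at)
  obtain jb where "jb \<in> U" "(b, fst (E!jb)) \<in> ?r"
    using assms(4,5) by (rule edge_rel_rtrancl_edge_at)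
  have "jb \<notin> A"
    using assms(1) \<open>(b, fst (E!jb)) \<in> ?r\<close>
    by (auto simp: A_def dest: edge_rel_rtrancl_sym intro: rtrancl_trans)
  moreover have "ja \<in> A" using \<open>ja \<in> U\<close> \<open>(a, fst (E!ja)) \<in> ?r\<close> by (simp add: A_def)
  moreover have "A \<subseteq> U" by (auto simp: A_def)
  moreover have "separator (spans E) U A" unfolding A_def by (rule component_separator)
  ultimately show ?thesis using \<open>jb \<in> U\<close> by blast
qed

lemma nonseparating_cocircuit_is_star:
  assumes og: "ordered_graph V E" and T: "nonseparating_cocircuit (spans E) (length E) T"
  obtains w where "w \<in> V" "T = star E w"
proof -
  let ?U = "{..<length E} - T"
  let ?r = "(edge_rel E ?U)\<^sup>*"
  have T_sub: "T \<subseteq> {..<length E}"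
    and not_spanned: "\<And>k. k \<in> T \<Longrightarrow> \<not> spans E ?U k"
    and spanned: "\<And>k l. k \<in> T \<Longrightarrow> l \<in> T \<Longrightarrow> spans E (insert k ?U) l"
    and no_separator: "\<And>A. A \<subseteq> ?U \<Longrightarrow> separator (spans E) ?U A \<Longrightarrow> A = {} \<or> A = ?U"
    using T by (auto simp: nonseparating_cocircuit_def)
  obtain k where "k \<in> T" using T by (auto simp: nonseparating_cocircuit_def)
  then have "k < length E" using T_sub by auto
  then obtain a b where k: "E!k = (a, b)" "edge_set E ! k = {a, b}" "a \<in> V" "b \<in> V"
    by (rule ordered_graph_edgeE[OF og])
  have "(a, b) \<notin> ?r"
    using not_spanned[OF \<open>k \<in> T\<close>] spans_iff_endpoints[OF \<open>k < length E\<close> k(2)] by simp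
  have star_if_trivial: "T = star E c" if "c \<in> {a, b}" "\<forall>u. (c, u) \<in> ?r \<longrightarrow> u = c" for c
  proof (rule star_if_isolated_in_complement[OF og T_sub])
    fix l assume "l \<in> T"
    then obtain c' d' where "edge_set E ! l = {c', d'}" "(a, c') \<in> ?r" "(b, d') \<in> ?r"
      using edge_crosses_cocircuit_edge[OF \<open>k < length E\<close> k(1) spanned not_spanned]
        \<open>k \<in> T\<close> by blast
    with that show "c \<in> edge_set E ! l" by auto
  qed (use that in blast)
  have "(\<forall>u. (a, u) \<in> ?r \<longrightarrow> u = a) \<or> (\<forall>u. (b, u) \<in> ?r \<longrightarrow> u = b)"
    using proper_separator_if_two_components[OF \<open>(a, b) \<notin> ?r\<close>] no_separator by blast
  then show thesis using star_if_trivial k(3,4) that by blast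
qed

lemma edge_set_image_if_stars_correspond:
  assumes og: "ordered_graph VG EG" and len: "length EH = length EG" and inj: "inj_on \<sigma> VG"
    and stars: "\<And>v. v \<in> VG \<Longrightarrow> star EG v = star EH (\<sigma> v)" and k: "k < length EG"
  shows "edge_set EH ! k = \<sigma> ` (edge_set EG ! k)"
proof -
  obtain a b where ab: "edge_set EG ! k = {a, b}" "a \<in> VG" "b \<in> VG" "a \<noteq> b"
    using ordered_graph_edgeE[OF og k] by metis
  then have "k \<in> star EH (\<sigma> a)" "k \<in> star EH (\<sigma> b)"
    using stars k by (auto simp: star_def)
  then have "\<sigma> a \<in> edge_set EH ! k" "\<sigma> b \<in> edge_set EH ! k" by (auto simp: star_def)
  moreover have "\<sigma> a \<noteq> \<sigma> b" using inj ab by (auto dest: inj_onD)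
  moreover have "edge_set EH ! k = {fst (EH!k), snd (EH!k)}" using k len by (simp add: nth_edge_set)
  ultimately show ?thesis using ab(1) by auto
qed

theorem mainTheorem3:
  fixes VG :: "'a set" and EG :: "('a \<times> 'a) list"
    and VH :: "'b set" and EH :: "('b \<times> 'b) list"
  assumes "ordered_graph VG EG" and "k_connected 3 VG EG"
    and "ordered_graph VH EH" and "no_isolated_vertices VH EH"
    and "length EH = length EG"
    and "meas_set_E TYPE('d::finite) EG = meas_set_E TYPE('d) EH"
  shows "\<exists>\<sigma>. bij_betw \<sigma> VG VH \<and>
           (\<forall>k < length EG. edge_set EH ! k = \<sigma> ` (edge_set EG ! k))"
proof -
  have spans: "spans EG = spans EH"
    using spans_eq_if_meas_set_eq[OF assms(6)] assms(5) by simp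
  have "\<exists>w. w \<in> VH \<and> star EG v = star EH w" if "v \<in> VG" for v
  proof -
    have "nonseparating_cocircuit (spans EH) (length EH) (star EG v)"
      using star_nonseparating_cocircuit[OF assms(1,2) that] spans assms(5) by simp
    then show ?thesis by (rule nonseparating_cocircuit_is_star[OF assms(3)]) auto
  qed
  then obtain \<sigma> where \<sigma>: "\<And>v. v \<in> VG \<Longrightarrow> \<sigma> v \<in> VH \<and> star EG v = star EH (\<sigma> v)" by metis
  have "inj_on \<sigma> VG"
  proof (rule inj_onI, rule ccontr)
    fix v v' assume "v \<in> VG" "v' \<in> VG" "\<sigma> v = \<sigma> v'" "v \<noteq> v'"
    with \<sigma> show False
      using star_diff[OF assms(1) k_connected_mono[OF assms(2)], of v v'] by force
  qed
  then have edges: "edge_set EH ! k = \<sigma> ` (edge_set EG ! k)" if "k < length EG" for k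
    using edge_set_image_if_stars_correspond[OF assms(1,5)] \<sigma> that by blast
  have "VH \<subseteq> \<sigma> ` VG"
  proof
    fix w assume "w \<in> VH"
    then obtain k where "k < length EH" "w \<in> edge_set EH ! k"
      using assms(4) by (fastforce simp: no_isolated_vertices_def in_set_conv_nth nth_edge_set)
    moreover have "edge_set EG ! k \<subseteq> VG" if "k < length EG"
      by (rule ordered_graph_edgeE[OF assms(1) that]) simp
    ultimately show "w \<in> \<sigma> ` VG" using edges assms(5) by auto
  qed
  with \<open>inj_on \<sigma> VG\<close> \<sigma> have "bij_betw \<sigma> VG VH" by (auto simp: bij_betw_def)
  with edges show ?thesis by blast
qed

end
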